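(* Consider a Markov decision process with state space $\mathcal{S}$ and action space $\mathcal{A}$ (subsets of Euclidean spaces), initial state distribution $\alpha$, stochastic policy $\pi(a\mid s)$, discount factor $\gamma\in(0,1)$, reward function $r(s,a)$, real transition density $T$ and learned transition density $T'$. Let $\rho_T^{\alpha,\pi},\rho_{T'}^{\alpha,\pi}$ be the normalized occupancy measures generated by $(\alpha,\pi,T)$ and $(\alpha,\pi,T')$, and let $p(s,a,s')=\rho_T^{\alpha,\pi}(s,a)T(s'\mid s,a)$, $p'(s,a,s')=\rho_{T'}^{\alpha,\pi}(s,a)T'(s'\mid s,a)$. If $r$ is $L_r$-Lipschitz and the training error of the WGAN is $\epsilon$, i.e. $W_1(p\,\|\,p')=\epsilon$, then $$|R(\pi,T)-R(\pi,T')|\le \frac{\epsilon L_r}{1-\gamma}.$$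
   Context: The normalized occupancy measure is $\rho_T^{\alpha,\pi}(s,a)=\sum_{t=0}^\infty(1-\gamma)\gamma^t\,\mathbb{P}(s_t=s,a_t=a\mid\alpha,\pi,T)$ for trajectories $s_0\sim\alpha$, $a_t\sim\pi(\cdot\mid s_t)$, $s_{t+1}\sim T(\cdot\mid s_t,a_t)$. The cumulative reward is $R(\pi,T)=R(\alpha,\pi,T)=\mathbb{E}\big[\sum_{t=0}^\infty\gamma^t r(s_t,a_t)\mid\alpha,\pi,T\big]=\mathbb{E}_{(s,a)\sim\rho_T^{\alpha,\pi}}[r(s,a)]/(1-\gamma)$. $W_1$ denotes the 1-Wasserstein distance, with Euclidean metrics on $\mathcal{S}\times\mathcal{A}$ and $\mathcal{S}\times\mathcal{A}\times\mathcal{S}$. *)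

theory Defs
  imports "HOL-Probability.Probability"
begin

definition sa_init ::
  "'s::euclidean_space measure \<Rightarrow> ('s \<Rightarrow> 'a::euclidean_space measure) \<Rightarrow> ('s \<times> 'a) measure" where
  "sa_init \<alpha> \<pi> = bind \<alpha> (\<lambda>s. bind (\<pi> s) (\<lambda>a. return borel (s, a)))"

primrec sa_dist ::
  "'s::euclidean_space measure \<Rightarrow> ('s \<Rightarrow> 'a::euclidean_space measure) \<Rightarrow>
   ('s \<times> 'a \<Rightarrow> 's measure) \<Rightarrow> nat \<Rightarrow> ('s \<times> 'a) measure" where
  "sa_dist \<alpha> \<pi> T 0 = sa_init \<alpha> \<pi>"
| "sa_dist \<alpha> \<pi> T (Suc t) =
     bind (sa_dist \<alpha> \<pi> T t)
       (\<lambda>(s, a). bind (T (s, a)) (\<lambda>s'. bind (\<pi> s') (\<lambda>a'. return borel (s', a'))))"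

definition occupancy ::
  "real \<Rightarrow> 's::euclidean_space measure \<Rightarrow> ('s \<Rightarrow> 'a::euclidean_space measure) \<Rightarrow>
   ('s \<times> 'a \<Rightarrow> 's measure) \<Rightarrow> ('s \<times> 'a) measure" where
  "occupancy \<gamma> \<alpha> \<pi> T = measure_of UNIV (sets borel)
     (\<lambda>X. \<Sum>t. ennreal ((1 - \<gamma>) * \<gamma> ^ t) * emeasure (sa_dist \<alpha> \<pi> T t) X)"

definition cumulative_reward ::
  "real \<Rightarrow> 's::euclidean_space measure \<Rightarrow> ('s \<Rightarrow> 'a::euclidean_space measure) \<Rightarrow>
   ('s \<times> 'a \<Rightarrow> 's measure) \<Rightarrow> ('s \<times> 'a \<Rightarrow> real) \<Rightarrow> real" where
  "cumulative_reward \<gamma> \<alpha> \<pi> T r = (\<integral>x. r x \<partial>occupancy \<gamma> \<alpha> \<pi> T) / (1 - \<gamma>)"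

definition transition_joint ::
  "('s::euclidean_space \<times> 'a::euclidean_space) measure \<Rightarrow> ('s \<times> 'a \<Rightarrow> 's measure) \<Rightarrow>
   ('s \<times> 'a \<times> 's) measure" where
  "transition_joint \<rho> T = bind \<rho> (\<lambda>(s, a). bind (T (s, a)) (\<lambda>s'. return borel (s, a, s')))"

definition couplings :: "'b::metric_space measure \<Rightarrow> 'b measure \<Rightarrow> ('b \<times> 'b) measure set" where
  "couplings P Q = {C. prob_space C \<and> sets C = sets (borel :: ('b \<times> 'b) measure) \<and>
      distr C borel fst = P \<and> distr C borel snd = Q}"

definition wasserstein1 :: "'b::metric_space measure \<Rightarrow> 'b measure \<Rightarrow> ennreal" where
  "wasserstein1 P Q = (INF C\<in>couplings P Q. \<integral>\<^sup>+ z. ennreal (dist (fst z) (snd z)) \<partial>C)"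

end

theory Submission
  imports Defs
begin

text \<open>Each occupancy measure \<open>\<rho>\<close> is concentrated on \<open>S \<times> A\<close> and is the \<open>(s, a)\<close>-marginal of its
  joint law \<open>p(s, a, s') = \<rho>(s, a) T(s' | s, a)\<close>. So for every coupling \<open>C\<close> of \<open>p\<close> and \<open>p'\<close> the
  difference of expected rewards is \<open>\<integral> r(s, a) - r(s\<^sub>1, a\<^sub>1) dC\<close>, which is at most
  \<open>L\<^sub>r \<integral> dist dC\<close> because the projection \<open>(s, a, s') \<mapsto> (s, a)\<close> is 1-Lipschitz. Taking the
  infimum over couplings bounds it by \<open>L\<^sub>r W\<^sub>1(p, p') = L\<^sub>r \<epsilon>\<close>, and the cumulative reward is the
  expected reward divided by \<open>1 - \<gamma>\<close>.\<close>

lemma (in prob_space) AE_in_if_emeasure_eq_1: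
  assumes "emeasure M X = 1"
  shows "AE x in M. x \<in> X"
proof (rule AE_prob_1)
  have "X \<in> events" using assms emeasure_notin_sets by fastforce
  then show "prob X = 1" using assms by (simp add: emeasure_eq_measure)
qed

lemma measurable_prob_algebra_subprob:
  "K \<in> N \<rightarrow>\<^sub>M prob_algebra R \<Longrightarrow> sets M = sets N \<Longrightarrow> K \<in> M \<rightarrow>\<^sub>M subprob_algebra R"
  using measurable_prob_algebraD[of K N R] measurable_cong_sets[of M N] by simp

lemma bind_in_space_prob_algebra:
  assumes "M \<in> space (prob_algebra N)" "K \<in> N \<rightarrow>\<^sub>M prob_algebra R"
  shows "M \<bind> K \<in> space (prob_algebra R)"
  using prob_space_bind'[OF assms] sets_bind'[OF assms] by (simp add: space_prob_algebra)

lemma AE_kernel_in_if_emeasure_eq_1: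
  assumes "K \<in> N \<rightarrow>\<^sub>M prob_algebra R" "x \<in> space N" "emeasure (K x) X = 1"
  shows "AE y in K x. y \<in> X"
proof -
  have "prob_space (K x)" using measurable_space[OF assms(1,2)] by (simp add: space_prob_algebra)
  then show ?thesis using assms(3) by (rule prob_space.AE_in_if_emeasure_eq_1)
qed

lemma AE_bind_in:
  assumes K: "K \<in> M \<rightarrow>\<^sub>M subprob_algebra N" and Y: "Y \<in> sets N"
    and "AE x in M. x \<in> X" and "\<And>x. x \<in> X \<Longrightarrow> AE y in K x. y \<in> Y"
  shows "AE y in M \<bind> K. y \<in> Y"
proof -
  have "Measurable.pred N (\<lambda>y. y \<in> Y)" using Y by simp
  moreover have "AE x in M. AE y in K x. y \<in> Y"
    using assms(3) by (rule AE_mp) (use assms(4) in auto)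
  ultimately show ?thesis by (simp add: AE_bind[OF K])
qed

lemma coupling_integral_diff_le:
  fixes f :: "'b::metric_space \<Rightarrow> real"
  assumes C: "C \<in> couplings P Q" and f: "L-lipschitz_on X f"
    and P_X: "AE x in P. x \<in> X" and Q_X: "AE x in Q. x \<in> X"
    and int_P: "integrable P f" and int_Q: "integrable Q f"
  shows "ennreal \<bar>integral\<^sup>L P f - integral\<^sup>L Q f\<bar>
           \<le> ennreal L * (\<integral>\<^sup>+ z. ennreal (dist (fst z) (snd z)) \<partial>C)"
proof -
  have P: "distr C borel fst = P" and Q: "distr C borel snd = Q"
    and sets_C: "sets C = sets (borel :: ('b \<times> 'b) measure)"
    using C by (auto simp: couplings_def)
  have fst[measurable]: "fst \<in> C \<rightarrow>\<^sub>M borel" and snd[measurable]: "snd \<in> C \<rightarrow>\<^sub>M borel"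
    and dist[measurable]: "(\<lambda>z. dist (fst z) (snd z)) \<in> borel_measurable C"
    by (auto simp: measurable_cong_sets[OF sets_C refl]
        intro!: borel_measurable_continuous_onI continuous_intros)
  have f_meas[measurable]: "f \<in> borel_measurable borel"
    using borel_measurable_integrable[OF int_P] by (simp add: P[symmetric])
  let ?h = "\<lambda>z. f (fst z) - f (snd z)"
  have "integrable C (\<lambda>z. f (fst z))" "integrable C (\<lambda>z. f (snd z))"
    using int_P int_Q by (simp_all add: P[symmetric] Q[symmetric] integrable_distr_eq)
  then have int_h: "integrable C ?h" by auto
  have diff: "integral\<^sup>L P f - integral\<^sup>L Q f = integral\<^sup>L C ?h"
    using \<open>integrable C (\<lambda>z. f (fst z))\<close> \<open>integrable C (\<lambda>z. f (snd z))\<close>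
    by (simp add: P[symmetric] Q[symmetric] integral_distr)
  have "AE z in C. fst z \<in> X" "AE z in C. snd z \<in> X"
    using AE_distrD[OF fst, of "\<lambda>x. x \<in> X"] AE_distrD[OF snd, of "\<lambda>x. x \<in> X"] P_X Q_X
    by (simp_all only: P Q)
  then have pointwise: "AE z in C. ennreal \<bar>?h z\<bar> \<le> ennreal L * ennreal (dist (fst z) (snd z))"
  proof eventually_elim
    case (elim z)
    then have "\<bar>?h z\<bar> \<le> L * dist (fst z) (snd z)"
      using lipschitz_onD[OF f] by (simp add: dist_real_def)
    then show ?case
      using lipschitz_on_nonneg[OF f] by (simp add: ennreal_mult[symmetric] ennreal_leI)
  qed
  have "ennreal \<bar>integral\<^sup>L C ?h\<bar> \<le> ennreal (integral\<^sup>L C (\<lambda>z. \<bar>?h z\<bar>))"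
    using integral_abs_bound[of C ?h] by (intro ennreal_leI)
  also have "\<dots> = (\<integral>\<^sup>+ z. ennreal \<bar>?h z\<bar> \<partial>C)"
    using int_h by (subst nn_integral_eq_integral) auto
  also have "\<dots> \<le> (\<integral>\<^sup>+ z. ennreal L * ennreal (dist (fst z) (snd z)) \<partial>C)"
    using pointwise by (rule nn_integral_mono_AE)
  also have "\<dots> = ennreal L * (\<integral>\<^sup>+ z. ennreal (dist (fst z) (snd z)) \<partial>C)"
    by (rule nn_integral_cmult) measurable
  finally show ?thesis by (simp only: diff)
qed

lemma lipschitz_integral_diff_le_wasserstein1:
  fixes f :: "'b::metric_space \<Rightarrow> real"
  assumes W: "wasserstein1 P Q = ennreal w" and w: "0 \<le> w" and f: "L-lipschitz_on X f"
    and "AE x in P. x \<in> X" and "AE x in Q. x \<in> X"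
    and "integrable P f" and "integrable Q f"
  shows "\<bar>integral\<^sup>L P f - integral\<^sup>L Q f\<bar> \<le> L * w"
proof -
  let ?d = "\<bar>integral\<^sup>L P f - integral\<^sup>L Q f\<bar>"
  let ?cost = "\<lambda>C. \<integral>\<^sup>+ z. ennreal (dist (fst z) (snd z)) \<partial>C"
  have coupling: "ennreal ?d \<le> ennreal L * ?cost C" if "C \<in> couplings P Q" for C
    using coupling_integral_diff_le[OF that f assms(4-7)] .
  have "couplings P Q \<noteq> {}"
    using W by (auto simp: wasserstein1_def)
  then obtain C0 where C0: "C0 \<in> couplings P Q" by blast
  consider "L = 0" | "L > 0" using lipschitz_on_nonneg[OF f] by linarith
  then show ?thesis
  proof cases
    case 1
    then show ?thesis using coupling[OF C0] by simp
  next
    case 2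
    have "ennreal (?d / L) \<le> ?cost C" if "C \<in> couplings P Q" for C
    proof -
      have "ennreal L * ennreal (?d / L) \<le> ennreal L * ?cost C"
        using coupling[OF that] 2 by (simp add: ennreal_mult[symmetric])
      then show ?thesis using 2 by (subst (asm) ennreal_mult_le_mult_iff) auto
    qed
    then have "ennreal (?d / L) \<le> ennreal w"
      unfolding W[symmetric] wasserstein1_def by (rule INF_greatest)
    then show ?thesis using 2 w by (simp add: pos_divide_le_eq mult.commute)
  qed
qed

definition policy_kernel ::
  "('s::euclidean_space \<Rightarrow> 'a::euclidean_space measure) \<Rightarrow> 's \<Rightarrow> ('s \<times> 'a) measure" where
  "policy_kernel \<pi> s = \<pi> s \<bind> (\<lambda>a. return borel (s, a))"

lemma sa_init_eq_bind_policy_kernel: "sa_init \<alpha> \<pi> = \<alpha> \<bind> policy_kernel \<pi>"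
  by (simp add: sa_init_def policy_kernel_def[abs_def])

lemma sa_dist_Suc_eq_bind_policy_kernel:
  "sa_dist \<alpha> \<pi> T (Suc t) = sa_dist \<alpha> \<pi> T t \<bind> (\<lambda>x. T x \<bind> policy_kernel \<pi>)"
  by (simp add: policy_kernel_def[abs_def] case_prod_beta')

lemma measurable_policy_kernel:
  fixes \<pi> :: "'s::euclidean_space \<Rightarrow> 'a::euclidean_space measure"
  assumes "\<pi> \<in> borel \<rightarrow>\<^sub>M prob_algebra borel"
  shows "policy_kernel \<pi> \<in> borel \<rightarrow>\<^sub>M prob_algebra borel"
  unfolding policy_kernel_def[abs_def]
proof (rule measurable_bind_prob_space2[OF assms])
  show "(\<lambda>(s, a). return borel (s, a)) \<in> borel \<Otimes>\<^sub>M borel \<rightarrow>\<^sub>M prob_algebra (borel :: ('s \<times> 'a) measure)"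
    by (simp add: borel_prod case_prod_beta')
qed

lemma sa_dist_in_prob_algebra:
  assumes \<alpha>: "\<alpha> \<in> space (prob_algebra borel)"
    and \<pi>: "\<pi> \<in> borel \<rightarrow>\<^sub>M prob_algebra borel" and T: "T \<in> borel \<rightarrow>\<^sub>M prob_algebra borel"
  shows "sa_dist \<alpha> \<pi> T t \<in> space (prob_algebra borel)"
proof (induction t)
  case 0
  show ?case
    unfolding sa_dist.simps sa_init_eq_bind_policy_kernel
    using \<alpha> measurable_policy_kernel[OF \<pi>] by (rule bind_in_space_prob_algebra)
next
  case (Suc t)
  show ?case
    unfolding sa_dist_Suc_eq_bind_policy_kernel
    using Suc measurable_bind_prob_space[OF T measurable_policy_kernel[OF \<pi>]]
    by (rule bind_in_space_prob_algebra)
qed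

lemma AE_policy_kernel_in:
  assumes \<pi>: "\<pi> \<in> borel \<rightarrow>\<^sub>M prob_algebra borel" and SA: "S \<times> A \<in> sets borel"
    and "s \<in> S" and "AE a in \<pi> s. a \<in> A"
  shows "AE y in policy_kernel \<pi> s. y \<in> S \<times> A"
  unfolding policy_kernel_def
proof (rule AE_bind_in[OF _ SA \<open>AE a in \<pi> s. a \<in> A\<close>])
  have sets_\<pi>: "sets (\<pi> s) = sets borel"
    using measurable_space[OF \<pi>] by (simp add: space_prob_algebra)
  show "(\<lambda>a. return borel (s, a)) \<in> \<pi> s \<rightarrow>\<^sub>M subprob_algebra borel"
    by (subst measurable_cong_sets[OF sets_\<pi> refl]) simp
  show "AE y in return borel (s, a). y \<in> S \<times> A" if "a \<in> A" for a
    using that \<open>s \<in> S\<close> SA by (simp add: AE_return)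
qed

lemma AE_sa_dist_in:
  assumes \<alpha>: "\<alpha> \<in> space (prob_algebra borel)" and "AE s in \<alpha>. s \<in> S"
    and \<pi>: "\<pi> \<in> borel \<rightarrow>\<^sub>M prob_algebra borel" and \<pi>_A: "\<forall>s\<in>S. AE a in \<pi> s. a \<in> A"
    and T: "T \<in> borel \<rightarrow>\<^sub>M prob_algebra borel" and T_S: "\<forall>x\<in>S \<times> A. AE s in T x. s \<in> S"
    and SA: "S \<times> A \<in> sets borel"
  shows "AE x in sa_dist \<alpha> \<pi> T t. x \<in> S \<times> A"
proof -
  note kernel = measurable_prob_algebra_subprob[OF measurable_policy_kernel[OF \<pi>]]
  show ?thesis
  proof (induction t)
    case 0
    have sets_\<alpha>: "sets \<alpha> = sets borel" using \<alpha> by (simp add: space_prob_algebra)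
    show ?case
      unfolding sa_dist.simps sa_init_eq_bind_policy_kernel
      using kernel[OF sets_\<alpha>] SA \<open>AE s in \<alpha>. s \<in> S\<close>
      by (rule AE_bind_in) (use AE_policy_kernel_in[OF \<pi> SA] \<pi>_A in blast)
  next
    case (Suc t)
    have sets_t: "sets (sa_dist \<alpha> \<pi> T t) = sets borel"
      using sa_dist_in_prob_algebra[OF \<alpha> \<pi> T] by (simp add: space_prob_algebra)
    have step: "AE y in T x \<bind> policy_kernel \<pi>. y \<in> S \<times> A" if "x \<in> S \<times> A" for x
    proof (rule AE_bind_in[OF _ SA])
      have "sets (T x) = sets borel"
        using measurable_space[OF T] by (simp add: space_prob_algebra)
      then show "policy_kernel \<pi> \<in> T x \<rightarrow>\<^sub>M subprob_algebra borel"
        by (rule kernel)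
      show "AE s in T x. s \<in> S" using T_S that by blast
      show "AE y in policy_kernel \<pi> s. y \<in> S \<times> A" if "s \<in> S" for s
        using AE_policy_kernel_in[OF \<pi> SA that] \<pi>_A that by blast
    qed
    show ?case
      unfolding sa_dist_Suc_eq_bind_policy_kernel
    proof (rule AE_bind_in[OF _ SA Suc step])
      show "(\<lambda>x. T x \<bind> policy_kernel \<pi>) \<in> sa_dist \<alpha> \<pi> T t \<rightarrow>\<^sub>M subprob_algebra borel"
        using measurable_bind_prob_space[OF T measurable_policy_kernel[OF \<pi>]] sets_t
        by (rule measurable_prob_algebra_subprob)
    qed
  qed
qed

lemma sets_occupancy: "sets (occupancy \<gamma> \<alpha> \<pi> T) = sets borel"
  unfolding occupancy_def by (simp add: sets_measure_of_conv sets.sigma_sets_eq[of borel, simplified])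

text \<open>No need to know that the weighted sum is countably additive: otherwise \<^const>\<open>measure_of\<close>
  yields the null measure.\<close>
lemma emeasure_occupancy_eq_0:
  assumes "\<And>t. emeasure (sa_dist \<alpha> \<pi> T t) N = 0"
  shows "emeasure (occupancy \<gamma> \<alpha> \<pi> T) N = 0"
  unfolding occupancy_def emeasure_measure_of_conv by (simp add: assms)

lemma AE_occupancy_in:
  assumes X: "X \<in> sets borel" and sets_sa_dist: "\<And>t. sets (sa_dist \<alpha> \<pi> T t) = sets borel"
    and "\<And>t. AE x in sa_dist \<alpha> \<pi> T t. x \<in> X"
  shows "AE x in occupancy \<gamma> \<alpha> \<pi> T. x \<in> X"
proof (rule AE_I[where N="- X"])
  have "- X \<in> sets borel" using X by (metis Compl_eq_Diff_UNIV sets.compl_sets space_borel)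
  then show "- X \<in> sets (occupancy \<gamma> \<alpha> \<pi> T)" by (simp add: sets_occupancy)
  have "- X \<in> null_sets (sa_dist \<alpha> \<pi> T t)" for t
    using \<open>- X \<in> sets borel\<close> assms(3) by (simp add: AE_iff_null_sets sets_sa_dist)
  then show "emeasure (occupancy \<gamma> \<alpha> \<pi> T) (- X) = 0"
    by (intro emeasure_occupancy_eq_0) auto
qed auto

lemma AE_occupancy_in_Times:
  assumes \<alpha>: "\<alpha> \<in> space (prob_algebra borel)" and "AE s in \<alpha>. s \<in> S"
    and \<pi>: "\<pi> \<in> borel \<rightarrow>\<^sub>M prob_algebra borel" and "\<forall>s\<in>S. AE a in \<pi> s. a \<in> A"
    and T: "T \<in> borel \<rightarrow>\<^sub>M prob_algebra borel" and "\<forall>x\<in>S \<times> A. AE s in T x. s \<in> S"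
    and SA: "S \<times> A \<in> sets borel"
  shows "AE x in occupancy \<gamma> \<alpha> \<pi> T. x \<in> S \<times> A"
proof (rule AE_occupancy_in[OF SA])
  show "sets (sa_dist \<alpha> \<pi> T t) = sets borel" for t
    using sa_dist_in_prob_algebra[OF \<alpha> \<pi> T] by (simp add: space_prob_algebra)
qed (rule AE_sa_dist_in[OF assms])

definition state_action :: "'s \<times> 'a \<times> 's \<Rightarrow> 's \<times> 'a" where
  "state_action = (\<lambda>(s, a, _). (s, a))"

lemma state_action_apply [simp]: "state_action (s, a, s') = (s, a)"
  by (simp add: state_action_def)

lemma lipschitz_on_state_action:
  "1-lipschitz_on U (state_action :: 's::metric_space \<times> 'a::metric_space \<times> 's \<Rightarrow> _)"
proof (rule lipschitz_onI)
  fix x y :: "'s \<times> 'a \<times> 's"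
  obtain s a s' t b t' where xy: "x = (s, a, s')" "y = (t, b, t')" by (cases x, cases y) auto
  have "dist a b \<le> dist (a, s') (b, t')" using dist_fst_le[of "(a, s')" "(b, t')"] by simp
  then have "(dist a b)\<^sup>2 \<le> (dist (a, s') (b, t'))\<^sup>2" by (simp add: power_mono)
  then show "dist (state_action x) (state_action y) \<le> 1 * dist x y"
    by (simp add: xy dist_Pair_Pair)
qed simp

lemma measurable_state_action:
  "(state_action :: 's::topological_space \<times> 'a::topological_space \<times> 's \<Rightarrow> _) \<in> borel \<rightarrow>\<^sub>M borel"
  unfolding state_action_def
  by (rule borel_measurable_continuous_onI) (auto simp: case_prod_beta' intro!: continuous_intros)

lemma measurable_transition_joint_kernel:
  fixes T :: "'s::euclidean_space \<times> 'a::euclidean_space \<Rightarrow> 's measure"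
  assumes T: "T \<in> borel \<rightarrow>\<^sub>M prob_algebra borel"
  shows "(\<lambda>(s, a). T (s, a) \<bind> (\<lambda>s'. return borel (s, a, s')))
           \<in> borel \<rightarrow>\<^sub>M prob_algebra (borel :: ('s \<times> 'a \<times> 's) measure)"
proof -
  have "(\<lambda>(x :: 's \<times> 'a, s' :: 's). (fst x, snd x, s')) \<in> borel \<rightarrow>\<^sub>M borel"
    by (rule borel_measurable_continuous_onI) (auto simp: case_prod_beta' intro!: continuous_intros)
  then have "(\<lambda>(x, s'). return (borel :: ('s \<times> 'a \<times> 's) measure) (fst x, snd x, s'))
               \<in> borel \<Otimes>\<^sub>M borel \<rightarrow>\<^sub>M prob_algebra borel"
    unfolding borel_prod using measurable_comp[OF _ measurable_return_prob_space]
    by (simp add: case_prod_beta' comp_def)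
  from measurable_bind_prob_space2[OF T this] show ?thesis
    by (simp add: case_prod_beta')
qed

lemma distr_transition_joint_state_action:
  fixes \<rho> :: "('s::euclidean_space \<times> 'a::euclidean_space) measure"
  assumes sets_\<rho>: "sets \<rho> = sets borel" and T: "T \<in> borel \<rightarrow>\<^sub>M prob_algebra borel"
  shows "distr (transition_joint \<rho> T) borel state_action = \<rho>"
proof -
  let ?K = "\<lambda>(s, a). T (s, a) \<bind> (\<lambda>s'. return borel (s, a, s'))"
  have K: "?K \<in> \<rho> \<rightarrow>\<^sub>M subprob_algebra (borel :: ('s \<times> 'a \<times> 's) measure)"
    using measurable_transition_joint_kernel[OF T] sets_\<rho> by (rule measurable_prob_algebra_subprob)
  have "space \<rho> \<noteq> {}" using sets_eq_imp_space_eq[OF sets_\<rho>] by simp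
  then have "distr (transition_joint \<rho> T) borel state_action = \<rho> \<bind> (\<lambda>x. distr (?K x) borel state_action)"
    unfolding transition_joint_def by (rule distr_bind[OF K _ measurable_state_action])
  also have "\<dots> = \<rho> \<bind> return borel"
  proof (rule bind_cong[OF refl])
    fix x :: "'s \<times> 'a"
    obtain s a where x: "x = (s, a)" by (cases x)
    have prob_T: "prob_space (T (s, a))" and sets_T: "sets (T (s, a)) = sets borel"
      using measurable_space[OF T, of "(s, a)"] by (auto simp: space_prob_algebra)
    have "(\<lambda>s'. return (borel :: ('s \<times> 'a \<times> 's) measure) (s, a, s')) \<in> T (s, a) \<rightarrow>\<^sub>M subprob_algebra borel"
      by (subst measurable_cong_sets[OF sets_T refl]) simp
    then have "distr (?K x) borel state_action
        = T (s, a) \<bind> (\<lambda>s'. distr (return borel (s, a, s')) borel state_action)"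
      unfolding x prod.case
      using prob_space.not_empty[OF prob_T] measurable_state_action by (rule distr_bind)
    also have "\<dots> = T (s, a) \<bind> (\<lambda>_. return borel x)"
      by (simp add: distr_return[OF measurable_state_action] x)
    also have "\<dots> = return borel x"
      using prob_T by (rule bind_const') (simp add: subprob_space_return)
    finally show "distr (?K x) borel state_action = return borel x" .
  qed
  also have "\<dots> = \<rho>" using sets_\<rho> by (rule bind_return'')
  finally show ?thesis .
qed

lemma
  fixes \<rho> :: "('s::euclidean_space \<times> 'a::euclidean_space) measure"
    and f :: "'s \<times> 'a \<Rightarrow> 'b::{banach, second_countable_topology}"
  assumes sets_\<rho>: "sets \<rho> = sets borel" and T: "T \<in> borel \<rightarrow>\<^sub>M prob_algebra borel"
  shows AE_transition_joint:
      "(AE x in \<rho>. P x) \<Longrightarrow> AE z in transition_joint \<rho> T. P (state_action z)"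
    and integrable_transition_joint:
      "integrable \<rho> f \<Longrightarrow> integrable (transition_joint \<rho> T) (\<lambda>z. f (state_action z))"
    and integral_transition_joint:
      "integrable \<rho> f \<Longrightarrow> (\<integral>z. f (state_action z) \<partial>transition_joint \<rho> T) = (\<integral>x. f x \<partial>\<rho>)"
proof -
  note \<rho> = distr_transition_joint_state_action[OF sets_\<rho> T]
  have "sets (transition_joint \<rho> T) = sets borel"
    unfolding transition_joint_def
    using measurable_space[OF measurable_transition_joint_kernel[OF T]] sets_eq_imp_space_eq[OF sets_\<rho>]
    by (subst sets_bind) (auto simp: space_prob_algebra)
  then have proj: "state_action \<in> transition_joint \<rho> T \<rightarrow>\<^sub>M borel"
    using measurable_state_action measurable_cong_sets[OF _ refl] by blast
  show "AE z in transition_joint \<rho> T. P (state_action z)" if "AE x in \<rho>. P x"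
    using that by (intro AE_distrD[OF proj]) (simp only: \<rho>)
  assume f: "integrable \<rho> f"
  then have f_meas: "f \<in> borel_measurable borel"
    using borel_measurable_integrable measurable_cong_sets[OF sets_\<rho> refl] by blast
  have "integrable (distr (transition_joint \<rho> T) borel state_action) f"
    unfolding \<rho> by (fact f)
  then show "integrable (transition_joint \<rho> T) (\<lambda>z. f (state_action z))"
    by (simp add: integrable_distr_eq[OF proj f_meas])
  have "(\<integral>x. f x \<partial>\<rho>) = (\<integral>x. f x \<partial>distr (transition_joint \<rho> T) borel state_action)"
    unfolding \<rho> ..
  then show "(\<integral>z. f (state_action z) \<partial>transition_joint \<rho> T) = (\<integral>x. f x \<partial>\<rho>)"
    by (simp add: integral_distr[OF proj f_meas])
qed

theorem theorem1:
  fixes \<alpha> :: "'s::euclidean_space measure"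
    and \<pi> :: "'s \<Rightarrow> 'a::euclidean_space measure"
    and T T' :: "'s \<times> 'a \<Rightarrow> 's measure"
    and r :: "'s \<times> 'a \<Rightarrow> real"
    and S :: "'s set" and A :: "'a set"
    and \<gamma> L\<^sub>r \<epsilon> :: real
  assumes "0 < \<gamma>" and "\<gamma> < 1"
    and "S \<in> sets borel" and "A \<in> sets borel"
    and "prob_space \<alpha>" and "sets \<alpha> = sets borel" and "emeasure \<alpha> S = 1"
    and "\<pi> \<in> borel \<rightarrow>\<^sub>M prob_algebra borel" and "\<forall>s\<in>S. emeasure (\<pi> s) A = 1"
    and "T \<in> borel \<rightarrow>\<^sub>M prob_algebra borel" and "\<forall>s\<in>S. \<forall>a\<in>A. emeasure (T (s, a)) S = 1"
    and "T' \<in> borel \<rightarrow>\<^sub>M prob_algebra borel" and "\<forall>s\<in>S. \<forall>a\<in>A. emeasure (T' (s, a)) S = 1"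
    and "L\<^sub>r-lipschitz_on (S \<times> A) r"
    and "integrable (occupancy \<gamma> \<alpha> \<pi> T) r" and "integrable (occupancy \<gamma> \<alpha> \<pi> T') r"
    and "0 \<le> \<epsilon>"
    and "wasserstein1 (transition_joint (occupancy \<gamma> \<alpha> \<pi> T) T)
                      (transition_joint (occupancy \<gamma> \<alpha> \<pi> T') T') = ennreal \<epsilon>"
  shows "\<bar>cumulative_reward \<gamma> \<alpha> \<pi> T r - cumulative_reward \<gamma> \<alpha> \<pi> T' r\<bar> \<le> \<epsilon> * L\<^sub>r / (1 - \<gamma>)"
proof -
  let ?\<rho> = "occupancy \<gamma> \<alpha> \<pi> T" and ?\<rho>' = "occupancy \<gamma> \<alpha> \<pi> T'"
  have SA: "S \<times> A \<in> sets borel" using assms(3,4) by (simp flip: borel_prod)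
  have \<alpha>: "\<alpha> \<in> space (prob_algebra borel)" using assms(5,6) by (simp add: space_prob_algebra)
  have \<alpha>_S: "AE s in \<alpha>. s \<in> S" using assms(5,7) by (rule prob_space.AE_in_if_emeasure_eq_1)
  have \<pi>_A: "\<forall>s\<in>S. AE a in \<pi> s. a \<in> A" and T_S: "\<forall>x\<in>S \<times> A. AE s in T x. s \<in> S"
    and T'_S: "\<forall>x\<in>S \<times> A. AE s in T' x. s \<in> S"
    using assms(8-13) by (auto intro: AE_kernel_in_if_emeasure_eq_1)
  note \<rho>_SA = AE_occupancy_in_Times[OF \<alpha> \<alpha>_S assms(8) \<pi>_A assms(10) T_S SA]
  note \<rho>'_SA = AE_occupancy_in_Times[OF \<alpha> \<alpha>_S assms(8) \<pi>_A assms(12) T'_S SA]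
  have lip: "L\<^sub>r-lipschitz_on (state_action -` (S \<times> A)) (\<lambda>z. r (state_action z))"
    using lipschitz_on_compose2[OF lipschitz_on_state_action lipschitz_on_subset[OF assms(14)]] by auto
  have p_SA: "AE z in transition_joint ?\<rho> T. z \<in> state_action -` (S \<times> A)"
    using AE_transition_joint[OF sets_occupancy assms(10) \<rho>_SA] by simp
  have p'_SA: "AE z in transition_joint ?\<rho>' T'. z \<in> state_action -` (S \<times> A)"
    using AE_transition_joint[OF sets_occupancy assms(12) \<rho>'_SA] by simp
  have "\<bar>(\<integral>z. r (state_action z) \<partial>transition_joint ?\<rho> T) - (\<integral>z. r (state_action z) \<partial>transition_joint ?\<rho>' T')\<bar>
      \<le> L\<^sub>r * \<epsilon>"
    by (rule lipschitz_integral_diff_le_wasserstein1[OF assms(18,17) lip p_SA p'_SA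
          integrable_transition_joint[OF sets_occupancy assms(10,15)]
          integrable_transition_joint[OF sets_occupancy assms(12,16)]])
  then have "\<bar>integral\<^sup>L ?\<rho> r - integral\<^sup>L ?\<rho>' r\<bar> \<le> \<epsilon> * L\<^sub>r"
    by (simp add: integral_transition_joint[OF sets_occupancy] assms(10,12,15,16) mult.commute)
  then show ?thesis
    using assms(2) by (simp add: cumulative_reward_def diff_divide_distrib[symmetric] divide_right_mono)
qed

end
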